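(* Let $\mathbf a=(a_1,\dots,a_n)$ with all $a_i\ge0$, and on $\mathfrak H^{2n+1}=\mathbb R^{2n+1}$ let $\xi_{\mathbf a}$ be the Reeb vector field of the contact form $\eta_{\mathbf a}=\big(dz-\sum_iy_idx_i\big)/\big(1+\sum_ia_i(x_i^2+y_i^2)\big)$. Then the flow of $\xi_{\mathbf a}$ generates a free proper action $\mathcal A$ of $\mathbb R$ on $\mathfrak H^{2n+1}$, and the quotient space $\mathfrak H^{2n+1}/\mathcal A(\mathbb R)$, with the complex structure induced from the transverse complex structure $J$, is biholomorphic to $\mathbb C^n$.
   Context: Coordinates on $\mathbb R^{2n+1}$ are $(x_1,\dots,x_n,y_1,\dots,y_n,z)$. The CR structure is $\mathcal D=\ker\eta_{\mathbf a}=\ker(dz-\sum_iy_idx_i)$ with $J(\partial_{y_i})=\partial_{x_i}+y_i\partial_z$, $J(\partial_{x_i}+y_i\partial_z)=-\partial_{y_i}$; $\xi_{\mathbf a}$ is determined by $\eta_{\mathbf a}(\xi_{\mathbf a})=1$, $\iota_{\xi_{\mathbf a}}d\eta_{\mathbf a}=0$, and it is an infinitesimal CR transformation, so $J$ descends to an almost complex structure on the orbit space. *)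

theory Defs
  imports "HOL-Analysis.Analysis"
begin

text \<open>Points of the Heisenberg group H^{2n+1} = R^{2n+1} are triples (x, y, z)
  with x, y in R^n (index type 'n) and z in R.  Tangent vectors use the same
  coordinates (dx-part, dy-part, dz-part).\<close>

type_synonym 'n pt = "(real^'n) \<times> (real^'n) \<times> real"

fun Ck :: "nat \<Rightarrow> ('a::real_normed_vector \<Rightarrow> 'b::real_normed_vector) \<Rightarrow> bool" where
  "Ck 0 f = continuous_on UNIV f"
| "Ck (Suc k) f = (\<exists>f'. (\<forall>x. (f has_derivative f' x) (at x)) \<and> (\<forall>v. Ck k (\<lambda>x. f' x v)))"

definition smooth :: "('a::real_normed_vector \<Rightarrow> 'b::real_normed_vector) \<Rightarrow> bool" where
  "smooth f \<longleftrightarrow> (\<forall>k. Ck k f)"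

definition eta :: "real^('n::finite) \<Rightarrow> 'n pt \<Rightarrow> 'n pt \<Rightarrow> real" where
  "eta a p v = (case p of (x, y, z) \<Rightarrow> case v of (u, w, c) \<Rightarrow>
      (c - (\<Sum>i\<in>UNIV. y$i * u$i)) / (1 + (\<Sum>i\<in>UNIV. a$i * ((x$i)^2 + (y$i)^2))))"

text \<open>Exterior derivative of a 1-form theta (given as p \<mapsto> covector), evaluated
  on the constant vector fields u, v: d theta(u,v) = u(theta(v)) - v(theta(u)).\<close>
definition dform :: "('m::real_normed_vector \<Rightarrow> 'm \<Rightarrow> real) \<Rightarrow> 'm \<Rightarrow> 'm \<Rightarrow> 'm \<Rightarrow> real" where
  "dform \<theta> p u v =
     frechet_derivative (\<lambda>q. \<theta> q v) (at p) u - frechet_derivative (\<lambda>q. \<theta> q u) (at p) v"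

definition is_reeb :: "('m::real_normed_vector \<Rightarrow> 'm \<Rightarrow> real) \<Rightarrow> ('m \<Rightarrow> 'm) \<Rightarrow> bool" where
  "is_reeb \<theta> \<xi> \<longleftrightarrow> (\<forall>p. \<theta> p (\<xi> p) = 1 \<and> (\<forall>v. dform \<theta> p (\<xi> p) v = 0))"

definition Dist :: "('n::finite) pt \<Rightarrow> 'n pt set" where
  "Dist p = {v. case p of (x, y, z) \<Rightarrow> case v of (u, w, c) \<Rightarrow> c - (\<Sum>i\<in>UNIV. y$i * u$i) = 0}"

text \<open>The complex structure J on D: J(d/dy_i) = d/dx_i + y_i d/dz,
  J(d/dx_i + y_i d/dz) = - d/dy_i.  A vector v = sum u_i X_i + sum w_i Y_i of D_p
  (X_i = d/dx_i + y_i d/dz, Y_i = d/dy_i) has coordinates (u, w, sum y_i u_i)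
  and is mapped to sum w_i X_i - sum u_i Y_i = (w, -u, sum y_i w_i).\<close>
definition Jcr :: "('n::finite) pt \<Rightarrow> 'n pt \<Rightarrow> 'n pt" where
  "Jcr p v = (case p of (x, y, z) \<Rightarrow> case v of (u, w, c) \<Rightarrow>
      (w, - u, \<Sum>i\<in>UNIV. y$i * w$i))"

definition free_proper_R_action :: "(real \<times> 'm::real_normed_vector \<Rightarrow> 'm) \<Rightarrow> bool" where
  "free_proper_R_action \<phi> \<longleftrightarrow>
     (\<forall>p. \<phi> (0, p) = p) \<and>
     (\<forall>s t p. \<phi> (s + t, p) = \<phi> (s, \<phi> (t, p))) \<and>
     (\<forall>t p. \<phi> (t, p) = p \<longrightarrow> t = 0) \<and>
     (\<forall>K. compact K \<longrightarrow> compact {(t, p). (\<phi> (t, p), p) \<in> K})"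

end

theory Submission
  imports Defs
begin

text \<open>In the coordinates \<open>x, y\<close> and \<open>w = z - x\<cdot>y/2\<close> the Reeb field of \<open>\<eta>\<^sub>a\<close> reads
  \<open>x\<^sub>i' = -2a\<^sub>iy\<^sub>i\<close>, \<open>y\<^sub>i' = 2a\<^sub>ix\<^sub>i\<close>, \<open>w' = 1\<close>: its flow rotates each plane \<open>(x\<^sub>i, y\<^sub>i)\<close>
  with angular speed \<open>2a\<^sub>i\<close> and translates \<open>w\<close> at unit speed. So \<open>w\<close> is a time function, which
  makes the action free and proper. With \<open>z\<^sub>i = x\<^sub>i - i y\<^sub>i\<close> and \<open>h = w - i|p|\<^sup>2/4\<close>, both CR
  functions, the components \<open>F\<^sub>i = exp (2i a\<^sub>i h) z\<^sub>i\<close> are constant along the flow, since \<open>h\<close>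
  moves by \<open>t\<close> while \<open>z\<^sub>i\<close> turns by \<open>exp (-2i a\<^sub>i t)\<close>. On the slice \<open>w = 0\<close> the map \<open>F\<close>
  is a bijection onto \<open>\<complex>\<^sup>n\<close>: from \<open>|F\<^sub>i|\<^sup>2 = exp (a\<^sub>i|p|\<^sup>2) |z\<^sub>i|\<^sup>2\<close> the number
  \<open>s = |p|\<^sup>2 = \<Sum>|z\<^sub>i|\<^sup>2\<close> solves \<open>s = \<Sum> |F\<^sub>i|\<^sup>2 exp (-a\<^sub>i s)\<close>, which has exactly one
  solution because \<open>a\<^sub>i \<ge> 0\<close>.\<close>

section \<open>Smooth maps\<close>

lemma Ck_SucI:
  assumes "\<forall>x. (f has_derivative f' x) (at x)" "\<forall>v. Ck k (\<lambda>x. f' x v)"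
  shows "Ck (Suc k) f"
  using assms by (auto simp only: Ck.simps)

lemma Ck_SucE:
  assumes "Ck (Suc k) f"
  obtains f' where "\<forall>x. (f has_derivative f' x) (at x)" "\<forall>v. Ck k (\<lambda>x. f' x v)"
  using assms by (auto simp only: Ck.simps)

declare Ck.simps(2) [simp del]

lemma Ck_Suc_imp_Ck: "Ck (Suc k) f \<Longrightarrow> Ck k f"
proof (induction k arbitrary: f)
  case 0
  then obtain f' where "\<forall>x. (f has_derivative f' x) (at x)" by (rule Ck_SucE)
  then show ?case
    by (auto simp: Ck.simps(1) intro: continuous_at_imp_continuous_on has_derivative_continuous)
next
  case (Suc k)
  from Suc.prems obtain f' where "\<forall>x. (f has_derivative f' x) (at x)" "\<forall>v. Ck (Suc k) (\<lambda>x. f' x v)"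
    by (rule Ck_SucE)
  then show ?case using Suc.IH by (blast intro: Ck_SucI)
qed

lemma Ck_const: "Ck k (\<lambda>x. c)"
proof (induction k arbitrary: c)
  case 0 then show ?case by (simp add: Ck.simps(1))
next
  case (Suc k) then show ?case by (intro Ck_SucI[where f'="\<lambda>x v. 0"]) simp_all
qed

lemma Ck_compose_bounded_linear: "bounded_linear L \<Longrightarrow> Ck k f \<Longrightarrow> Ck k (\<lambda>x. L (f x))"
proof (induction k arbitrary: f)
  case 0 then show ?case
    by (auto simp: Ck.simps(1) intro: continuous_on_compose2[OF linear_continuous_on])
next
  case (Suc k)
  from Suc.prems(2) obtain f' where "\<forall>x. (f has_derivative f' x) (at x)" "\<forall>v. Ck k (\<lambda>x. f' x v)"
    by (rule Ck_SucE)
  with Suc show ?case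
    by (intro Ck_SucI[where f'="\<lambda>x v. L (f' x v)"]) (simp_all add: bounded_linear.has_derivative)
qed

lemma Ck_id: "Ck k (\<lambda>x. x)"
proof (induction k)
  case 0 then show ?case by (simp add: Ck.simps(1))
next
  case (Suc k) then show ?case by (intro Ck_SucI[where f'="\<lambda>x v. v"]) (simp_all add: Ck_const)
qed

lemma Ck_add: "Ck k f \<Longrightarrow> Ck k g \<Longrightarrow> Ck k (\<lambda>x. f x + g x)"
proof (induction k arbitrary: f g)
  case 0 then show ?case by (auto simp: Ck.simps(1) intro: continuous_on_add)
next
  case (Suc k)
  from Suc.prems(1) obtain f' where "\<forall>x. (f has_derivative f' x) (at x)" "\<forall>v. Ck k (\<lambda>x. f' x v)"
    by (rule Ck_SucE)
  moreover from Suc.prems(2) obtain g' where "\<forall>x. (g has_derivative g' x) (at x)" "\<forall>v. Ck k (\<lambda>x. g' x v)"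
    by (rule Ck_SucE)
  ultimately show ?case
    by (intro Ck_SucI[where f'="\<lambda>x v. f' x v + g' x v"]) (simp_all add: has_derivative_add Suc.IH)
qed

lemma Ck_diff: "Ck k f \<Longrightarrow> Ck k g \<Longrightarrow> Ck k (\<lambda>x. f x - g x)"
  using Ck_add[of k f "\<lambda>x. - g x"] Ck_compose_bounded_linear[OF bounded_linear_minus[OF bounded_linear_ident], of k g]
  by simp

lemma Ck_sum: "finite A \<Longrightarrow> (\<And>i. i \<in> A \<Longrightarrow> Ck k (f i)) \<Longrightarrow> Ck k (\<lambda>x. \<Sum>i\<in>A. f i x)"
  by (induction A rule: finite_induct) (auto intro: Ck_add Ck_const)

lemma Ck_bounded_bilinear:
  assumes "bounded_bilinear b"
  shows "Ck k f \<Longrightarrow> Ck k g \<Longrightarrow> Ck k (\<lambda>x. b (f x) (g x))"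
proof (induction k arbitrary: f g)
  case 0 then show ?case
    using bounded_bilinear.continuous_on[OF assms] by (auto simp: Ck.simps(1))
next
  case (Suc k)
  from Suc.prems(1) obtain f' where "\<forall>x. (f has_derivative f' x) (at x)" "\<forall>v. Ck k (\<lambda>x. f' x v)"
    by (rule Ck_SucE)
  moreover from Suc.prems(2) obtain g' where "\<forall>x. (g has_derivative g' x) (at x)" "\<forall>v. Ck k (\<lambda>x. g' x v)"
    by (rule Ck_SucE)
  moreover have "Ck k f" "Ck k g" using Suc.prems Ck_Suc_imp_Ck by blast+
  ultimately show ?case
    by (intro Ck_SucI[where f'="\<lambda>x v. b (f x) (g' x v) + b (f' x v) (g x)"])
      (simp_all add: bounded_bilinear.FDERIV[OF assms] Ck_add Suc.IH)
qed

lemma Ck_Pair: "Ck k f \<Longrightarrow> Ck k g \<Longrightarrow> Ck k (\<lambda>x. (f x, g x))"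
proof (induction k arbitrary: f g)
  case 0 then show ?case by (auto simp: Ck.simps(1) intro: continuous_on_Pair)
next
  case (Suc k)
  from Suc.prems(1) obtain f' where "\<forall>x. (f has_derivative f' x) (at x)" "\<forall>v. Ck k (\<lambda>x. f' x v)"
    by (rule Ck_SucE)
  moreover from Suc.prems(2) obtain g' where "\<forall>x. (g has_derivative g' x) (at x)" "\<forall>v. Ck k (\<lambda>x. g' x v)"
    by (rule Ck_SucE)
  ultimately show ?case
    by (intro Ck_SucI[where f'="\<lambda>x v. (f' x v, g' x v)"]) (simp_all add: has_derivative_Pair Suc.IH)
qed

lemma bounded_linear_vec_lambda:
  fixes L :: "'i::finite \<Rightarrow> 'a::real_normed_vector \<Rightarrow> 'b::real_normed_vector"
  assumes "\<And>i. bounded_linear (L i)"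
  shows "bounded_linear (\<lambda>h. \<chi> i. L i h)"
proof
  show "(\<chi> i. L i (b1 + b2)) = (\<chi> i. L i b1) + (\<chi> i. L i b2)" for b1 b2
    using assms by (simp add: vec_eq_iff linear_add bounded_linear.linear)
  show "(\<chi> i. L i (r *\<^sub>R b)) = r *\<^sub>R (\<chi> i. L i b)" for r b
    using assms by (simp add: vec_eq_iff linear_scale bounded_linear.linear)
  have "\<forall>i. \<exists>K. \<forall>x. norm (L i x) \<le> norm x * K"
    using assms bounded_linear.bounded by blast
  then obtain K where K: "\<And>i x. norm (L i x) \<le> norm x * K i"
    by metis
  show "\<exists>K. \<forall>x. norm (\<chi> i. L i x) \<le> norm x * K"
  proof (intro exI allI)
    fix x
    have "norm (\<chi> i. L i x) \<le> (\<Sum>i\<in>UNIV. norm (L i x))"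
      using L2_set_le_sum[of UNIV "\<lambda>i. norm (L i x)"] by (simp add: norm_vec_def)
    also have "\<dots> \<le> (\<Sum>i\<in>UNIV. norm x * K i)"
      using K by (intro sum_mono)
    finally show "norm (\<chi> i. L i x) \<le> norm x * (\<Sum>i\<in>UNIV. K i)"
      by (simp add: sum_distrib_left)
  qed
qed

lemma has_derivative_vec_lambda:
  fixes f :: "'i::finite \<Rightarrow> 'a::real_normed_vector \<Rightarrow> 'b::real_normed_vector"
  assumes "\<And>i. (f i has_derivative f' i) F"
  shows "((\<lambda>x. \<chi> i. f i x) has_derivative (\<lambda>h. \<chi> i. f' i h)) F"
  unfolding has_derivative_def
proof
  show "bounded_linear (\<lambda>h. \<chi> i. f' i h)"
    using assms has_derivative_bounded_linear by (blast intro: bounded_linear_vec_lambda)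
  let ?L = "Lim F (\<lambda>x. x)"
  have "((\<lambda>y. \<chi> i. ((f i y - f i ?L) - f' i (y - ?L)) /\<^sub>R norm (y - ?L)) \<longlongrightarrow> (\<chi> i. 0)) F"
    using assms unfolding has_derivative_def by (intro tendsto_vec_lambda) auto
  moreover have "(\<lambda>y. \<chi> i. ((f i y - f i ?L) - f' i (y - ?L)) /\<^sub>R norm (y - ?L))
      = (\<lambda>y. (((\<chi> i. f i y) - (\<chi> i. f i ?L)) - (\<chi> i. f' i (y - ?L))) /\<^sub>R norm (y - ?L))"
    by (simp add: fun_eq_iff vec_eq_iff)
  moreover have "(\<chi> i. 0) = (0 :: 'b^'i)"
    by (simp add: vec_eq_iff)
  ultimately show "((\<lambda>y. (((\<chi> i. f i y) - (\<chi> i. f i ?L)) - (\<chi> i. f' i (y - ?L))) /\<^sub>R norm (y - ?L))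
      \<longlongrightarrow> 0) F"
    by simp
qed

lemma has_vector_derivative_vec_lambda:
  fixes f :: "'i::finite \<Rightarrow> real \<Rightarrow> 'b::real_normed_vector"
  assumes "\<And>i. (f i has_vector_derivative f' i) F"
  shows "((\<lambda>s. \<chi> i. f i s) has_vector_derivative (\<chi> i. f' i)) F"
proof -
  have "((\<lambda>s. \<chi> i. f i s) has_derivative (\<lambda>h. \<chi> i. h *\<^sub>R f' i)) F"
    using assms unfolding has_vector_derivative_def by (rule has_derivative_vec_lambda)
  moreover have "(\<lambda>h. \<chi> i. h *\<^sub>R f' i) = (\<lambda>h. h *\<^sub>R (\<chi> i. f' i))"
    by (simp add: fun_eq_iff vec_eq_iff)
  ultimately show ?thesis unfolding has_vector_derivative_def by simp
qed

lemma Ck_vec_lambda: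
  fixes f :: "'i::finite \<Rightarrow> 'a::real_normed_vector \<Rightarrow> 'b::real_normed_vector"
  shows "(\<And>i. Ck k (f i)) \<Longrightarrow> Ck k (\<lambda>x. \<chi> i. f i x)"
proof (induction k arbitrary: f)
  case 0 then show ?case by (simp add: Ck.simps(1) continuous_on_vec_lambda)
next
  case (Suc k)
  have "\<forall>i. \<exists>f'. (\<forall>x. (f i has_derivative f' x) (at x)) \<and> (\<forall>v. Ck k (\<lambda>x. f' x v))"
    using Suc.prems Ck_SucE by metis
  then obtain f' where "\<And>i. (\<forall>x. (f i has_derivative f' i x) (at x)) \<and> (\<forall>v. Ck k (\<lambda>x. f' i x v))"
    by metis
  then show ?case
    by (intro Ck_SucI[where f'="\<lambda>x v. \<chi> i. f' i x v"]) (simp_all add: has_derivative_vec_lambda Suc.IH)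
qed

lemma Ck_compose:
  fixes g :: "'b::euclidean_space \<Rightarrow> 'c::real_normed_vector" and f :: "'a::real_normed_vector \<Rightarrow> 'b"
  shows "Ck k f \<Longrightarrow> Ck k g \<Longrightarrow> Ck k (\<lambda>x. g (f x))"
proof (induction k arbitrary: f g)
  case 0 then show ?case using continuous_on_compose2[of UNIV g UNIV f] by (simp add: Ck.simps(1))
next
  case (Suc k)
  from Suc.prems(1) obtain f' where f': "\<forall>x. (f has_derivative f' x) (at x)" "\<forall>v. Ck k (\<lambda>x. f' x v)"
    by (rule Ck_SucE)
  from Suc.prems(2) obtain g' where g': "\<forall>x. (g has_derivative g' x) (at x)" "\<forall>v. Ck k (\<lambda>x. g' x v)"
    by (rule Ck_SucE)
  have f: "Ck k f" using Suc.prems Ck_Suc_imp_Ck by blast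
  \<comment> \<open>expanding \<open>f' x v\<close> in a basis separates the two factors of the chain rule\<close>
  have basis: "g' (f x) (f' x v) = (\<Sum>b\<in>Basis. (f' x v \<bullet> b) *\<^sub>R g' (f x) b)" for x v
  proof -
    have "linear (g' (f x))" using g'(1) has_derivative_linear by blast
    then show ?thesis
      by (subst euclidean_representation[symmetric, of "f' x v"]) (simp add: linear_sum linear_scale)
  qed
  have "Ck k (\<lambda>x. g' (f x) (f' x v))" for v
    unfolding basis
    by (intro Ck_sum finite_Basis Ck_bounded_bilinear[OF bounded_bilinear_scaleR]
        Ck_compose_bounded_linear[OF bounded_linear_inner_left] Suc.IH f f'(2)[rule_format] g'(2)[rule_format])
  with f' g' show ?case
    by (intro Ck_SucI[where f'="\<lambda>x v. g' (f x) (f' x v)"]) (simp_all add: has_derivative_compose)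
qed

lemma Ck_sin_cos: "Ck k (sin :: real \<Rightarrow> real) \<and> Ck k (cos :: real \<Rightarrow> real)"
proof (induction k)
  case 0 then show ?case by (simp add: Ck.simps(1) continuous_on_sin continuous_on_cos)
next
  case (Suc k)
  have "Ck k (\<lambda>x. - sin x :: real)"
    using Suc Ck_compose_bounded_linear[OF bounded_linear_minus[OF bounded_linear_ident]] by blast
  with Suc.IH show ?case
    by (intro conjI Ck_SucI[where f'="\<lambda>x v. cos x * v"] Ck_SucI[where f'="\<lambda>x v. - sin x * v"] allI
        has_field_derivative_imp_has_derivative[OF DERIV_sin]
        has_field_derivative_imp_has_derivative[OF DERIV_cos]
        Ck_bounded_bilinear[OF bounded_bilinear_mult] Ck_const) simp_all
qed

lemma Ck_exp: "Ck k (exp :: 'a::{real_normed_field,banach} \<Rightarrow> 'a)"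
proof (induction k)
  case 0 then show ?case by (simp add: Ck.simps(1) continuous_on_exp)
next
  case (Suc k)
  show ?case
    by (intro Ck_SucI[where f'="\<lambda>x v. exp x * v"] allI
        has_field_derivative_imp_has_derivative[OF DERIV_exp]
        Ck_bounded_bilinear[OF bounded_bilinear_mult] Ck_const Suc.IH)
qed

lemma smooth_continuous_on: "smooth f \<Longrightarrow> continuous_on S f"
  unfolding smooth_def by (metis Ck.simps(1) continuous_on_subset subset_UNIV)

lemma smooth_const: "smooth (\<lambda>x. c)"
  unfolding smooth_def by (simp add: Ck_const)
lemma smooth_id: "smooth (\<lambda>x. x)"
  unfolding smooth_def by (simp add: Ck_id)
lemma smooth_compose_bounded_linear: "bounded_linear L \<Longrightarrow> smooth f \<Longrightarrow> smooth (\<lambda>x. L (f x))"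
  unfolding smooth_def by (blast intro: Ck_compose_bounded_linear)
lemma smooth_add: "smooth f \<Longrightarrow> smooth g \<Longrightarrow> smooth (\<lambda>x. f x + g x)"
  unfolding smooth_def by (blast intro: Ck_add)
lemma smooth_diff: "smooth f \<Longrightarrow> smooth g \<Longrightarrow> smooth (\<lambda>x. f x - g x)"
  unfolding smooth_def by (blast intro: Ck_diff)
lemma smooth_sum: "finite A \<Longrightarrow> (\<And>i. i \<in> A \<Longrightarrow> smooth (f i)) \<Longrightarrow> smooth (\<lambda>x. \<Sum>i\<in>A. f i x)"
  unfolding smooth_def by (blast intro: Ck_sum)
lemma smooth_mult:
  fixes f g :: "'a::real_normed_vector \<Rightarrow> 'b::real_normed_algebra"
  shows "smooth f \<Longrightarrow> smooth g \<Longrightarrow> smooth (\<lambda>x. f x * g x)"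
  unfolding smooth_def by (blast intro: Ck_bounded_bilinear[OF bounded_bilinear_mult])
lemma smooth_Pair: "smooth f \<Longrightarrow> smooth g \<Longrightarrow> smooth (\<lambda>x. (f x, g x))"
  unfolding smooth_def by (blast intro: Ck_Pair)
lemma smooth_vec_lambda:
  fixes f :: "'i::finite \<Rightarrow> 'a::real_normed_vector \<Rightarrow> 'b::real_normed_vector"
  shows "(\<And>i. smooth (f i)) \<Longrightarrow> smooth (\<lambda>x. \<chi> i. f i x)"
  unfolding smooth_def by (blast intro: Ck_vec_lambda)
lemma smooth_sin: "smooth f \<Longrightarrow> smooth (\<lambda>x. sin (f x :: real))"
  unfolding smooth_def using Ck_sin_cos Ck_compose[where g=sin] by blast
lemma smooth_cos: "smooth f \<Longrightarrow> smooth (\<lambda>x. cos (f x :: real))"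
  unfolding smooth_def using Ck_sin_cos Ck_compose[where g=cos] by blast
lemma smooth_exp: "smooth f \<Longrightarrow> smooth (\<lambda>x. exp (f x :: complex))"
  unfolding smooth_def using Ck_exp Ck_compose[where g=exp] by blast

lemmas smooth_intros = smooth_const smooth_id smooth_add smooth_diff smooth_sum smooth_mult
  smooth_Pair smooth_vec_lambda smooth_sin smooth_cos smooth_exp finite_class.finite_UNIV
  smooth_compose_bounded_linear[OF bounded_linear_fst]
  smooth_compose_bounded_linear[OF bounded_linear_snd]
  smooth_compose_bounded_linear[OF bounded_linear_vec_nth]
  smooth_compose_bounded_linear[OF bounded_linear_of_real]
  smooth_compose_bounded_linear[OF bounded_linear_divide]

section \<open>The Reeb field of \<open>\<eta>\<^sub>a\<close>\<close>

definition eta_denom :: "real^'n::finite \<Rightarrow> 'n pt \<Rightarrow> real" where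
  "eta_denom a p = 1 + (\<Sum>i\<in>UNIV. a$i * ((fst p $ i)^2 + (fst (snd p) $ i)^2))"

definition eta_numer :: "'n::finite pt \<Rightarrow> 'n pt \<Rightarrow> real" where
  "eta_numer p v = snd (snd v) - (\<Sum>i\<in>UNIV. fst (snd p) $ i * fst v $ i)"

definition eta_denom_deriv :: "real^'n::finite \<Rightarrow> 'n pt \<Rightarrow> 'n pt \<Rightarrow> real" where
  "eta_denom_deriv a p e =
     (\<Sum>i\<in>UNIV. 2 * a$i * (fst p $ i * fst e $ i + fst (snd p) $ i * fst (snd e) $ i))"

definition eta_deriv :: "real^'n::finite \<Rightarrow> 'n pt \<Rightarrow> 'n pt \<Rightarrow> 'n pt \<Rightarrow> real" where
  "eta_deriv a p v e = - (\<Sum>i\<in>UNIV. fst (snd e) $ i * fst v $ i) / eta_denom a p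
     - eta_numer p v * eta_denom_deriv a p e / (eta_denom a p)^2"

definition reeb :: "real^'n::finite \<Rightarrow> 'n pt \<Rightarrow> 'n pt" where
  "reeb a p = ((\<chi> i. - 2 * a$i * fst (snd p) $ i), (\<chi> i. 2 * a$i * fst p $ i),
     1 + (\<Sum>i\<in>UNIV. a$i * ((fst p $ i)^2 - (fst (snd p) $ i)^2)))"

lemma eta_eq: "eta a p v = eta_numer p v / eta_denom a p"
  by (cases p; cases v) (simp add: eta_def eta_numer_def eta_denom_def)

lemma eta_denom_pos: "\<forall>i. a$i \<ge> 0 \<Longrightarrow> eta_denom a p > 0"
  unfolding eta_denom_def by (smt (verit) sum_nonneg zero_le_mult_iff zero_le_power2)

lemma has_derivative_fst_nth:
  "((\<lambda>p::'n::finite pt. fst p $ i) has_derivative (\<lambda>e. fst e $ i)) F"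
  by (intro bounded_linear_imp_has_derivative bounded_linear_compose[OF bounded_linear_vec_nth]
      bounded_linear_fst)

lemma has_derivative_fst_snd_nth:
  "((\<lambda>p::'n::finite pt. fst (snd p) $ i) has_derivative (\<lambda>e. fst (snd e) $ i)) F"
  by (intro bounded_linear_imp_has_derivative bounded_linear_compose[OF bounded_linear_vec_nth]
      bounded_linear_compose[OF bounded_linear_fst bounded_linear_snd])

lemma has_derivative_snd_snd:
  "((\<lambda>p::'n::finite pt. snd (snd p)) has_derivative (\<lambda>e. snd (snd e))) F"
  by (intro bounded_linear_imp_has_derivative bounded_linear_compose[OF bounded_linear_snd]
      bounded_linear_snd)

lemmas has_derivative_coordinates =
  has_derivative_fst_nth has_derivative_fst_snd_nth has_derivative_snd_snd

lemma has_derivative_eta_denom: "(eta_denom a has_derivative eta_denom_deriv a p) (at p)"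
proof -
  have "((\<lambda>q. eta_denom a q) has_derivative (\<lambda>e. 0 + (\<Sum>i\<in>UNIV. a$i *
      ((fst p $ i * fst e $ i + fst e $ i * fst p $ i)
       + (fst (snd p) $ i * fst (snd e) $ i + fst (snd e) $ i * fst (snd p) $ i))))) (at p)"
    unfolding eta_denom_def power2_eq_square
    by (intro has_derivative_add has_derivative_const has_derivative_sum has_derivative_mult_right
        has_derivative_mult has_derivative_coordinates)
  then show ?thesis
    by (rule has_derivative_eq_rhs) (auto simp: fun_eq_iff eta_denom_deriv_def algebra_simps
        intro!: sum.cong)
qed

lemma has_derivative_eta:
  assumes "\<forall>i. a$i \<ge> 0"
  shows "((\<lambda>q. eta a q v) has_derivative eta_deriv a p v) (at p)"
proof -
  have numer: "((\<lambda>q. eta_numer q v) has_derivative (\<lambda>e. 0 - (\<Sum>i\<in>UNIV. fst (snd e) $ i * fst v $ i))) (at p)"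
    unfolding eta_numer_def
    by (intro has_derivative_diff has_derivative_const has_derivative_sum has_derivative_mult_left
        has_derivative_coordinates)
  have D: "eta_denom a p \<noteq> 0" using eta_denom_pos[OF assms, of p] by simp
  from has_derivative_divide[OF numer has_derivative_eta_denom D] show ?thesis
    unfolding eta_eq
    by (rule has_derivative_eq_rhs) (use D in \<open>simp add: fun_eq_iff eta_deriv_def power2_eq_square field_simps\<close>)
qed

lemma dform_eta:
  "\<forall>i. a$i \<ge> 0 \<Longrightarrow> dform (eta a) p u v = eta_deriv a p v u - eta_deriv a p u v"
  unfolding dform_def by (simp add: frechet_derivative_at[OF has_derivative_eta, symmetric])

lemma eta_numer_reeb: "eta_numer p (reeb a p) = eta_denom a p"
proof -
  have "snd (snd (reeb a p)) = eta_denom a p - 2 * (\<Sum>i\<in>UNIV. a$i * (fst (snd p) $ i)^2)"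
    by (simp add: reeb_def eta_denom_def sum_distrib_left algebra_simps flip: sum.distrib sum_subtractf)
  moreover have "(\<Sum>i\<in>UNIV. fst (snd p) $ i * fst (reeb a p) $ i) = - 2 * (\<Sum>i\<in>UNIV. a$i * (fst (snd p) $ i)^2)"
    by (simp add: reeb_def sum_distrib_left power2_eq_square mult_ac)
  ultimately show ?thesis by (simp add: eta_numer_def)
qed

lemma eta_denom_deriv_reeb: "eta_denom_deriv a p (reeb a p) = 0"
  unfolding eta_denom_deriv_def reeb_def by (intro sum.neutral) (simp add: algebra_simps)

lemma is_reeb_reeb:
  assumes "\<forall>i. a$i \<ge> 0"
  shows "is_reeb (eta a) (reeb a)"
  unfolding is_reeb_def
proof (intro allI conjI)
  fix p v
  have D: "eta_denom a p \<noteq> 0" using eta_denom_pos[OF assms, of p] by simp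
  then show "eta a p (reeb a p) = 1" by (simp add: eta_eq eta_numer_reeb)
  have "(\<Sum>i\<in>UNIV. fst (snd (reeb a p)) $ i * fst v $ i) - (\<Sum>i\<in>UNIV. fst (snd v) $ i * fst (reeb a p) $ i)
      = eta_denom_deriv a p v"
    unfolding eta_denom_deriv_def by (simp add: reeb_def algebra_simps flip: sum_subtractf)
  then show "dform (eta a) p (reeb a p) v = 0"
    using D by (simp add: dform_eta[OF assms] eta_deriv_def eta_denom_deriv_reeb eta_numer_reeb
        power2_eq_square field_simps)
qed

lemma sum_axis_mult_left: "(\<Sum>i\<in>UNIV. axis j (1::real) $ i * f i) = f j"
  by (simp add: axis_def if_distrib if_distribR cong: if_cong)

lemma sum_axis_mult_right: "(\<Sum>i\<in>UNIV. f i * axis j (1::real) $ i) = f j"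
  by (simp add: axis_def if_distrib if_distribR cong: if_cong)

lemma reeb_unique:
  assumes "\<forall>i. a$i \<ge> 0" and "is_reeb (eta a) \<xi>"
  shows "\<xi> = reeb a"
proof
  fix p
  have D: "eta_denom a p \<noteq> 0" using eta_denom_pos[OF assms(1), of p] by simp
  have "eta a p (\<xi> p) = 1" and dform: "\<And>v. dform (eta a) p (\<xi> p) v = 0"
    using assms(2) unfolding is_reeb_def by blast+
  then have numer: "eta_numer p (\<xi> p) = eta_denom a p"
    using D by (simp add: eta_eq field_simps)
  have deriv: "eta_deriv a p v (\<xi> p) = eta_deriv a p (\<xi> p) v" for v
    using dform[of v] by (simp add: dform_eta[OF assms(1)])
  \<comment> \<open>evaluate \<open>\<iota>\<^sub>\<xi> d\<eta> = 0\<close> on the coordinate vectors \<open>\<partial>\<^sub>z\<close>, \<open>\<partial>\<^sub>y\<^sub>j\<close> and \<open>\<partial>\<^sub>x\<^sub>j\<close>\<close>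
  have denom: "eta_denom_deriv a p (\<xi> p) = 0"
    using deriv[of "(0, 0, 1)"] D by (simp add: eta_deriv_def eta_numer_def eta_denom_deriv_def numer)
  have x: "fst (\<xi> p) $ j = fst (reeb a p) $ j" for j
  proof -
    have "eta_numer p (0, axis j 1, 0) = 0" by (simp add: eta_numer_def)
    moreover have "eta_denom_deriv a p (0, axis j 1, 0) = 2 * a$j * fst (snd p) $ j"
      using sum_axis_mult_left[of j "\<lambda>i. 2 * a$i * fst (snd p) $ i"]
      by (simp add: eta_denom_deriv_def mult_ac)
    ultimately show ?thesis
      using deriv[of "(0, axis j 1, 0)"] D
      by (simp add: eta_deriv_def numer denom reeb_def sum_axis_mult_left power2_eq_square field_simps)
  qed
  have y: "fst (snd (\<xi> p)) $ j = fst (snd (reeb a p)) $ j" for j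
  proof -
    have "eta_numer p (axis j 1, 0, 0) = - fst (snd p) $ j"
      by (simp add: eta_numer_def sum_axis_mult_right)
    moreover have "eta_denom_deriv a p (axis j 1, 0, 0) = 2 * a$j * fst p $ j"
      using sum_axis_mult_left[of j "\<lambda>i. 2 * a$i * fst p $ i"]
      by (simp add: eta_denom_deriv_def mult_ac)
    ultimately show ?thesis
      using deriv[of "(axis j 1, 0, 0)"] D
      by (simp add: eta_deriv_def numer denom reeb_def sum_axis_mult_left power2_eq_square field_simps)
  qed
  have "eta_numer p (\<xi> p) = eta_numer p (reeb a p)"
    by (simp add: numer eta_numer_reeb)
  then have z: "snd (snd (\<xi> p)) = snd (snd (reeb a p))"
    using x by (simp add: eta_numer_def)
  show "\<xi> p = reeb a p"
    using x y z by (simp add: prod_eq_iff vec_eq_iff)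
qed

section \<open>The Reeb flow\<close>

definition rot_x :: "real^'n::finite \<Rightarrow> real \<Rightarrow> real^'n \<Rightarrow> real^'n \<Rightarrow> real^'n" where
  "rot_x a t x y = (\<chi> i. x$i * cos (2 * a$i * t) - y$i * sin (2 * a$i * t))"

definition rot_y :: "real^'n::finite \<Rightarrow> real \<Rightarrow> real^'n \<Rightarrow> real^'n \<Rightarrow> real^'n" where
  "rot_y a t x y = (\<chi> i. x$i * sin (2 * a$i * t) + y$i * cos (2 * a$i * t))"

definition wcoord :: "'n::finite pt \<Rightarrow> real" where
  "wcoord p = snd (snd p) - (\<Sum>i\<in>UNIV. fst p $ i * fst (snd p) $ i) / 2"

definition reeb_flow :: "real^'n::finite \<Rightarrow> real \<Rightarrow> 'n pt \<Rightarrow> 'n pt" where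
  "reeb_flow a t p = (rot_x a t (fst p) (fst (snd p)), rot_y a t (fst p) (fst (snd p)),
     wcoord p + t + (\<Sum>i\<in>UNIV. rot_x a t (fst p) (fst (snd p)) $ i * rot_y a t (fst p) (fst (snd p)) $ i) / 2)"

lemma smooth_wcoord: "smooth wcoord"
  unfolding wcoord_def[abs_def] by (intro smooth_intros)

lemma smooth_reeb_flow: "smooth (\<lambda>tp. reeb_flow a (fst tp) (snd tp))"
  unfolding reeb_flow_def rot_x_def rot_y_def wcoord_def by (intro smooth_intros)

lemma wcoord_reeb_flow: "wcoord (reeb_flow a t p) = wcoord p + t"
  by (simp add: wcoord_def reeb_flow_def)

lemma reeb_flow_0: "reeb_flow a 0 p = p"
  by (cases p) (simp add: reeb_flow_def rot_x_def rot_y_def wcoord_def)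

lemma rot_x_add: "rot_x a s (rot_x a t x y) (rot_y a t x y) = rot_x a (s + t) x y"
  by (simp add: rot_x_def rot_y_def vec_eq_iff distrib_left cos_add sin_add algebra_simps)

lemma rot_y_add: "rot_y a s (rot_x a t x y) (rot_y a t x y) = rot_y a (s + t) x y"
  by (simp add: rot_x_def rot_y_def vec_eq_iff distrib_left cos_add sin_add algebra_simps)

lemma reeb_flow_add: "reeb_flow a (s + t) p = reeb_flow a s (reeb_flow a t p)"
proof -
  have "reeb_flow a s (reeb_flow a t p) = (rot_x a (s + t) (fst p) (fst (snd p)), rot_y a (s + t) (fst p) (fst (snd p)),
     (wcoord p + t) + s + (\<Sum>i\<in>UNIV. rot_x a (s + t) (fst p) (fst (snd p)) $ i * rot_y a (s + t) (fst p) (fst (snd p)) $ i) / 2)"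
  proof -
    have "fst (reeb_flow a t p) = rot_x a t (fst p) (fst (snd p))"
      and "fst (snd (reeb_flow a t p)) = rot_y a t (fst p) (fst (snd p))"
      by (simp_all add: reeb_flow_def)
    then show ?thesis
      by (simp only: reeb_flow_def[of a s "reeb_flow a t p"] rot_x_add rot_y_add wcoord_reeb_flow)
  qed
  then show ?thesis unfolding reeb_flow_def[of a "s + t" p] by (simp add: algebra_simps)
qed

lemma has_real_derivative_rot_x_nth:
  "((\<lambda>s. rot_x a s x y $ i) has_real_derivative - 2 * a$i * rot_y a t x y $ i) (at t)"
  unfolding rot_x_def rot_y_def by (auto intro!: derivative_eq_intros simp: algebra_simps)

lemma has_real_derivative_rot_y_nth:
  "((\<lambda>s. rot_y a s x y $ i) has_real_derivative 2 * a$i * rot_x a t x y $ i) (at t)"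
  unfolding rot_x_def rot_y_def by (auto intro!: derivative_eq_intros simp: algebra_simps)

lemma has_vector_derivative_reeb_flow:
  "((\<lambda>s. reeb_flow a s p) has_vector_derivative reeb a (reeb_flow a t p)) (at t)"
proof -
  let ?X = "\<lambda>s. rot_x a s (fst p) (fst (snd p))" and ?Y = "\<lambda>s. rot_y a s (fst p) (fst (snd p))"
  have "((\<lambda>s. \<chi> i. ?X s $ i) has_vector_derivative (\<chi> i. - 2 * a$i * ?Y t $ i)) (at t)"
    by (intro has_vector_derivative_vec_lambda
        has_real_derivative_rot_x_nth[unfolded has_real_derivative_iff_has_vector_derivative])
  moreover have "((\<lambda>s. \<chi> i. ?Y s $ i) has_vector_derivative (\<chi> i. 2 * a$i * ?X t $ i)) (at t)"
    by (intro has_vector_derivative_vec_lambda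
        has_real_derivative_rot_y_nth[unfolded has_real_derivative_iff_has_vector_derivative])
  moreover have "((\<lambda>s. wcoord p + s + (\<Sum>i\<in>UNIV. ?X s $ i * ?Y s $ i) / 2) has_real_derivative
      1 + (\<Sum>i\<in>UNIV. a$i * ((?X t $ i)^2 - (?Y t $ i)^2))) (at t)"
    by (auto intro!: derivative_eq_intros has_real_derivative_rot_x_nth has_real_derivative_rot_y_nth
        simp: sum_divide_distrib power2_eq_square algebra_simps) (intro sum.cong refl; simp)
  ultimately show ?thesis
    unfolding reeb_flow_def reeb_def has_real_derivative_iff_has_vector_derivative
    by (auto intro!: has_vector_derivative_Pair)
qed

lemma free_proper_R_actionI:
  fixes \<phi> :: "real \<times> 'm::{real_normed_vector,heine_borel} \<Rightarrow> 'm" and \<tau> :: "'m \<Rightarrow> real"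
  assumes cont: "continuous_on UNIV \<phi>" "continuous_on UNIV \<tau>"
    and "\<And>p. \<phi> (0, p) = p" and "\<And>s t p. \<phi> (s + t, p) = \<phi> (s, \<phi> (t, p))"
    and time: "\<And>t p. \<tau> (\<phi> (t, p)) = \<tau> p + t"
  shows "free_proper_R_action \<phi>"
  unfolding free_proper_R_action_def
proof (intro conjI allI impI)
  fix t p
  assume "\<phi> (t, p) = p"
  then show "t = 0" using time[of t p] by simp
next
  fix K :: "('m \<times> 'm) set"
  assume K: "compact K"
  let ?S = "{(t, p). (\<phi> (t, p), p) \<in> K}"
  have "?S = (\<lambda>tp. (\<phi> tp, snd tp)) -` K" by auto
  moreover have "continuous_on UNIV (\<lambda>tp. (\<phi> tp, snd tp))"
    by (intro continuous_on_Pair cont(1) continuous_on_snd continuous_on_id)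
  ultimately have "closed ?S"
    using closed_vimage[OF compact_imp_closed[OF K]] by simp
  \<comment> \<open>\<open>\<tau>\<close> reads off the time, so \<open>?S\<close> lies in a continuous image of \<open>K\<close>\<close>
  let ?g = "\<lambda>(q, p). (\<tau> q - \<tau> p, p)"
  have "?S \<subseteq> ?g ` K"
  proof
    fix x assume "x \<in> ?S"
    then obtain t p where "x = (t, p)" and "(\<phi> (t, p), p) \<in> K" by blast
    then show "x \<in> ?g ` K" by (force simp: time)
  qed
  moreover have "continuous_on K ?g"
    unfolding case_prod_unfold
    by (intro continuous_on_Pair continuous_on_diff continuous_on_snd continuous_on_id
        continuous_on_compose2[OF cont(2)] continuous_on_fst) auto
  then have "compact (?g ` K)"
    using K by (rule compact_continuous_image)
  ultimately have "bounded ?S"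
    using bounded_subset compact_imp_bounded by blast
  with \<open>closed ?S\<close> show "compact ?S"
    unfolding compact_eq_bounded_closed by blast
qed (use assms in simp_all)

lemma free_proper_R_action_reeb_flow:
  "free_proper_R_action (\<lambda>tp. reeb_flow a (fst tp) (snd tp))"
proof (rule free_proper_R_actionI[where \<tau>=wcoord])
  show "continuous_on UNIV (\<lambda>tp. reeb_flow a (fst tp) (snd tp))"
    by (rule smooth_continuous_on[OF smooth_reeb_flow])
  show "continuous_on UNIV wcoord"
    by (rule smooth_continuous_on[OF smooth_wcoord])
qed (simp_all only: fst_conv snd_conv reeb_flow_0 reeb_flow_add wcoord_reeb_flow)

section \<open>The quotient map to \<open>\<complex>\<^sup>n\<close>\<close>

definition sqnorm :: "'n::finite pt \<Rightarrow> real" where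
  "sqnorm p = (\<Sum>i\<in>UNIV. (fst p $ i)^2 + (fst (snd p) $ i)^2)"

definition zcoord :: "'n::finite pt \<Rightarrow> 'n \<Rightarrow> complex" where
  "zcoord p i = of_real (fst p $ i) - \<i> * of_real (fst (snd p) $ i)"

definition hcoord :: "'n::finite pt \<Rightarrow> complex" where
  "hcoord p = of_real (wcoord p) - \<i> * of_real (sqnorm p / 4)"

definition quotient_map :: "real^'n::finite \<Rightarrow> 'n pt \<Rightarrow> complex^'n" where
  "quotient_map a p = (\<chi> i. exp (2 * \<i> * of_real (a$i) * hcoord p) * zcoord p i)"

definition wcoord_deriv :: "'n::finite pt \<Rightarrow> 'n pt \<Rightarrow> real" where
  "wcoord_deriv p e =
     snd (snd e) - (\<Sum>i\<in>UNIV. fst p $ i * fst (snd e) $ i + fst e $ i * fst (snd p) $ i) / 2"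

definition sqnorm_deriv :: "'n::finite pt \<Rightarrow> 'n pt \<Rightarrow> real" where
  "sqnorm_deriv p e = 2 * (\<Sum>i\<in>UNIV. fst p $ i * fst e $ i + fst (snd p) $ i * fst (snd e) $ i)"

definition hcoord_deriv :: "'n::finite pt \<Rightarrow> 'n pt \<Rightarrow> complex" where
  "hcoord_deriv p e = of_real (wcoord_deriv p e) - \<i> * of_real (sqnorm_deriv p e / 4)"

definition quotient_map_deriv :: "real^'n::finite \<Rightarrow> 'n pt \<Rightarrow> 'n pt \<Rightarrow> complex^'n" where
  "quotient_map_deriv a p e = (\<chi> i. exp (2 * \<i> * of_real (a$i) * hcoord p) *
     (zcoord e i + 2 * \<i> * of_real (a$i) * hcoord_deriv p e * zcoord p i))"

lemma smooth_quotient_map: "smooth (quotient_map a)"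
  unfolding quotient_map_def[abs_def] hcoord_def zcoord_def wcoord_def sqnorm_def power2_eq_square
  by (intro smooth_intros)

lemma has_derivative_wcoord: "(wcoord has_derivative wcoord_deriv p) (at p)"
  unfolding wcoord_def[abs_def] wcoord_deriv_def[abs_def]
  by (intro has_derivative_diff has_derivative_coordinates has_derivative_sum has_derivative_mult
      bounded_linear.has_derivative[OF bounded_linear_divide])

lemma has_derivative_sqnorm: "(sqnorm has_derivative sqnorm_deriv p) (at p)"
proof -
  have "((\<lambda>q. sqnorm q) has_derivative (\<lambda>e. \<Sum>i\<in>UNIV.
      (fst p $ i * fst e $ i + fst e $ i * fst p $ i)
      + (fst (snd p) $ i * fst (snd e) $ i + fst (snd e) $ i * fst (snd p) $ i))) (at p)"
    unfolding sqnorm_def power2_eq_square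
    by (intro has_derivative_add has_derivative_sum has_derivative_mult has_derivative_coordinates)
  then show ?thesis
    by (rule has_derivative_eq_rhs) (simp add: fun_eq_iff sqnorm_deriv_def sum_distrib_left algebra_simps)
qed

lemma has_derivative_hcoord: "(hcoord has_derivative hcoord_deriv p) (at p)"
  unfolding hcoord_def[abs_def] hcoord_deriv_def[abs_def]
  by (intro has_derivative_diff has_derivative_of_real has_derivative_mult_right
      bounded_linear.has_derivative[OF bounded_linear_divide] has_derivative_wcoord has_derivative_sqnorm)

lemma has_derivative_zcoord: "((\<lambda>q. zcoord q i) has_derivative (\<lambda>e. zcoord e i)) (at p)"
  unfolding zcoord_def
  by (intro has_derivative_diff has_derivative_of_real has_derivative_mult_right has_derivative_coordinates)

lemma has_derivative_quotient_map: "(quotient_map a has_derivative quotient_map_deriv a p) (at p)"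
proof -
  have exp: "((\<lambda>q. exp (2 * \<i> * of_real (a$i) * hcoord q)) has_derivative
      (\<lambda>e. exp (2 * \<i> * of_real (a$i) * hcoord p) * (2 * \<i> * of_real (a$i) * hcoord_deriv p e))) (at p)"
    for i
    using has_derivative_compose[OF has_derivative_mult_right[OF has_derivative_hcoord]
        has_field_derivative_imp_has_derivative[OF DERIV_exp]] .
  show ?thesis
    unfolding quotient_map_def[abs_def]
    by (rule has_derivative_eq_rhs[OF has_derivative_vec_lambda[OF has_derivative_mult[OF exp has_derivative_zcoord]]])
      (simp add: fun_eq_iff quotient_map_deriv_def algebra_simps)
qed

lemma Jcr_eq: "Jcr p v = (fst (snd v), - fst v, \<Sum>i\<in>UNIV. fst (snd p) $ i * fst (snd v) $ i)"
  by (cases p; cases v) (simp add: Jcr_def)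

lemma Dist_iff: "v \<in> Dist p \<longleftrightarrow> snd (snd v) = (\<Sum>i\<in>UNIV. fst (snd p) $ i * fst v $ i)"
  by (cases p; cases v) (simp add: Dist_def)

lemma zcoord_Jcr: "zcoord (Jcr p v) i = \<i> * zcoord v i"
  by (simp add: zcoord_def Jcr_eq complex_eq_iff)

lemma hcoord_deriv_Jcr:
  assumes "v \<in> Dist p"
  shows "hcoord_deriv p (Jcr p v) = \<i> * hcoord_deriv p v"
proof -
  have "wcoord_deriv p (Jcr p v) = sqnorm_deriv p v / 4"
    unfolding wcoord_deriv_def sqnorm_deriv_def Jcr_eq fst_conv snd_conv
    by (simp add: sum_distrib_left sum_divide_distrib flip: sum.distrib sum_subtractf)
      (intro sum.cong refl; simp add: field_simps)
  moreover have "- (sqnorm_deriv p (Jcr p v) / 4) = wcoord_deriv p v"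
    using assms unfolding Dist_iff wcoord_deriv_def sqnorm_deriv_def Jcr_eq fst_conv snd_conv
    by (simp add: sum_distrib_left sum_divide_distrib flip: sum.distrib sum_subtractf sum_negf)
      (intro sum.cong refl; simp add: field_simps)
  ultimately show ?thesis
    by (simp add: hcoord_deriv_def complex_eq_iff)
qed

lemma quotient_map_deriv_Jcr:
  "v \<in> Dist p \<Longrightarrow> quotient_map_deriv a p (Jcr p v) = \<i> *s quotient_map_deriv a p v"
  by (simp add: quotient_map_deriv_def vec_eq_iff hcoord_deriv_Jcr zcoord_Jcr algebra_simps)

text \<open>A preimage of \<open>L\<close> is sought with \<open>dw = 0\<close> and \<open>dz\<^sub>i = exp (-2i a\<^sub>i h) L\<^sub>i - \<rho> a\<^sub>i z\<^sub>i\<close>;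
  then \<open>d|p|\<^sup>2 = 2\<rho>\<close> is a linear equation for \<open>\<rho>\<close> with coefficient \<open>1 + \<Sum>a\<^sub>i|z\<^sub>i|\<^sup>2 > 0\<close>.\<close>

lemma surj_quotient_map_deriv:
  assumes "\<forall>i. a$i \<ge> 0"
  shows "surj (quotient_map_deriv a p)"
  unfolding surj_def
proof
  fix L :: "complex^'a"
  define E where "E i = exp (2 * \<i> * of_real (a$i) * hcoord p)" for i
  define \<mu> where "\<mu> i = L$i / E i" for i
  define R where "R = (\<Sum>i\<in>UNIV. fst p $ i * Re (\<mu> i) - fst (snd p) $ i * Im (\<mu> i))"
  define T where "T = (\<Sum>i\<in>UNIV. a$i * (fst p $ i * fst p $ i + fst (snd p) $ i * fst (snd p) $ i))"
  define \<rho> where "\<rho> = R / (1 + T)"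
  define ex where "ex = (\<chi> i. Re (\<mu> i) - \<rho> * a$i * fst p $ i)"
  define ey where "ey = (\<chi> i. - Im (\<mu> i) - \<rho> * a$i * fst (snd p) $ i)"
  define e where "e = (ex, ey, (\<Sum>i\<in>UNIV. fst p $ i * ey $ i + ex $ i * fst (snd p) $ i) / 2)"
  have "T \<ge> 0" using assms by (auto simp: T_def intro!: sum_nonneg)
  then have "\<rho> * (1 + T) = R" by (simp add: \<rho>_def)
  then have R: "R = \<rho> + \<rho> * T" by (simp add: algebra_simps)
  have "sqnorm_deriv p e = 2 * (R - \<rho> * T)"
    unfolding sqnorm_deriv_def R_def T_def
    by (simp add: e_def ex_def ey_def sum_distrib_left algebra_simps flip: sum_subtractf)
  then have "hcoord_deriv p e = - \<i> * of_real (\<rho> / 2)"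
    by (simp add: hcoord_deriv_def wcoord_deriv_def e_def R)
  then have "2 * \<i> * of_real (a$i) * hcoord_deriv p e = of_real (\<rho> * a$i)" for i
    by (simp add: complex_eq_iff)
  moreover have "zcoord e i = \<mu> i - of_real (\<rho> * a$i) * zcoord p i" for i
    by (simp add: zcoord_def e_def ex_def ey_def complex_eq_iff)
  moreover have "E i \<noteq> 0" for i
    by (simp add: E_def)
  ultimately have "quotient_map_deriv a p e = L"
    by (simp add: quotient_map_deriv_def vec_eq_iff flip: E_def) (simp add: \<mu>_def algebra_simps)
  then show "\<exists>e. L = quotient_map_deriv a p e" by metis
qed

lemma quotient_map_nth:
  "quotient_map a p $ i = of_real (exp (a$i * sqnorm p / 2)) * cis (2 * a$i * wcoord p) * zcoord p i"
proof -
  have "2 * \<i> * of_real (a$i) * hcoord p = of_real (a$i * sqnorm p / 2) + \<i> * of_real (2 * a$i * wcoord p)"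
    by (simp add: hcoord_def complex_eq_iff)
  then show ?thesis
    by (simp only: quotient_map_def vec_lambda_beta exp_add cis_conv_exp exp_of_real)
qed

lemma sqnorm_eq_sum_norm_zcoord: "sqnorm p = (\<Sum>i\<in>UNIV. (cmod (zcoord p i))^2)"
  unfolding sqnorm_def cmod_power2 by (simp add: zcoord_def)

lemma zcoord_reeb_flow: "zcoord (reeb_flow a t p) i = zcoord p i * cis (- (2 * a$i * t))"
  by (simp add: zcoord_def reeb_flow_def rot_x_def rot_y_def complex_eq_iff algebra_simps)

lemma sqnorm_reeb_flow: "sqnorm (reeb_flow a t p) = sqnorm p"
  by (simp add: sqnorm_eq_sum_norm_zcoord zcoord_reeb_flow norm_mult)

lemma quotient_map_reeb_flow: "quotient_map a (reeb_flow a t p) = quotient_map a p"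
proof -
  have "cis (2 * a$i * (wcoord p + t)) * cis (- (2 * a$i * t)) = cis (2 * a$i * wcoord p)" for i
    by (simp add: cis_mult algebra_simps)
  then show ?thesis
    by (simp add: vec_eq_iff quotient_map_nth sqnorm_reeb_flow wcoord_reeb_flow zcoord_reeb_flow
        mult.assoc)
qed

lemma norm_quotient_map_nth:
  "(cmod (quotient_map a p $ i))^2 = exp (a$i * sqnorm p) * (cmod (zcoord p i))^2"
proof -
  have "(exp (a$i * sqnorm p / 2))^2 = exp (a$i * sqnorm p)"
    by (simp add: power2_eq_square flip: exp_add)
  then show ?thesis
    by (simp add: quotient_map_nth norm_mult power_mult_distrib)
qed

lemma sum_eq_if_exp_weighted_eq:
  fixes u v c :: "'i \<Rightarrow> real"
  assumes "\<And>i. i \<in> I \<Longrightarrow> c i \<ge> 0" and "\<And>i. i \<in> I \<Longrightarrow> u i \<ge> 0" and "\<And>i. i \<in> I \<Longrightarrow> v i \<ge> 0"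
    and "\<And>i. i \<in> I \<Longrightarrow> exp (c i * sum u I) * u i = exp (c i * sum v I) * v i"
  shows "sum u I = sum v I"
proof -
  have le: "sum v I \<le> sum u I"
    if v: "\<And>i. i \<in> I \<Longrightarrow> v i \<ge> 0"
      and eq: "\<And>i. i \<in> I \<Longrightarrow> exp (c i * sum u I) * u i = exp (c i * sum v I) * v i"
    for u v :: "'i \<Rightarrow> real"
  proof (rule ccontr)
    assume "\<not> sum v I \<le> sum u I"
    then have less: "sum u I < sum v I" by simp
    have "v i \<le> u i" if "i \<in> I" for i
    proof -
      have "exp (c i * sum u I) \<le> exp (c i * sum v I)"
        using less assms(1)[OF that] by (simp add: mult_left_mono)
      then have "exp (c i * sum u I) * v i \<le> exp (c i * sum v I) * v i"
        using v[OF that] by (rule mult_right_mono)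
      also have "\<dots> = exp (c i * sum u I) * u i"
        using eq[OF that] by simp
      finally show ?thesis by simp
    qed
    then have "sum v I \<le> sum u I" by (rule sum_mono)
    with less show False by simp
  qed
  show ?thesis
    using le[of v u] le[of u v] assms(2-4) by (simp add: antisym)
qed

lemma quotient_map_wcoord_eq_imp_eq:
  assumes "\<forall>i. a$i \<ge> 0" and F: "quotient_map a p = quotient_map a q" and w: "wcoord p = wcoord q"
  shows "p = q"
proof -
  have "exp (a$i * sqnorm p) * (cmod (zcoord p i))^2 = exp (a$i * sqnorm q) * (cmod (zcoord q i))^2" for i
    using F by (metis norm_quotient_map_nth)
  then have sqnorm: "sqnorm p = sqnorm q"
    unfolding sqnorm_eq_sum_norm_zcoord
    by (intro sum_eq_if_exp_weighted_eq[where c="\<lambda>i. a$i"]) (use assms(1) in auto)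
  have "zcoord p i = zcoord q i" for i
  proof -
    have "of_real (exp (a$i * sqnorm p / 2)) * cis (2 * a$i * wcoord p) * zcoord p i
        = of_real (exp (a$i * sqnorm p / 2)) * cis (2 * a$i * wcoord p) * zcoord q i"
      using F by (metis quotient_map_nth sqnorm w)
    moreover have "of_real (exp (a$i * sqnorm p / 2)) * cis (2 * a$i * wcoord p) \<noteq> 0"
      by simp
    ultimately show ?thesis by simp
  qed
  then have "fst p = fst q" and "fst (snd p) = fst (snd q)"
    by (auto simp: vec_eq_iff zcoord_def complex_eq_iff)
  moreover from this w have "snd (snd p) = snd (snd q)"
    by (simp add: wcoord_def)
  ultimately show ?thesis by (simp add: prod_eq_iff)
qed

lemma quotient_map_eq_iff:
  assumes "\<forall>i. a$i \<ge> 0"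
  shows "quotient_map a p = quotient_map a q \<longleftrightarrow> (\<exists>t. q = reeb_flow a t p)"
proof
  assume "quotient_map a p = quotient_map a q"
  then have "reeb_flow a (wcoord q - wcoord p) p = q"
    by (intro quotient_map_wcoord_eq_imp_eq[OF assms]) (simp_all add: quotient_map_reeb_flow wcoord_reeb_flow)
  then show "\<exists>t. q = reeb_flow a t p" by metis
qed (auto simp: quotient_map_reeb_flow)

lemma ex_fixed_point_sum_exp:
  fixes b c :: "'i \<Rightarrow> real"
  assumes "finite I" and "\<And>i. i \<in> I \<Longrightarrow> b i \<ge> 0" and "\<And>i. i \<in> I \<Longrightarrow> c i \<ge> 0"
  obtains s where "s = (\<Sum>i\<in>I. b i * exp (- (c i * s)))"
proof -
  let ?g = "\<lambda>s. s - (\<Sum>i\<in>I. b i * exp (- (c i * s)))"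
  have "?g 0 \<le> 0"
    using assms(2) by (simp add: sum_nonneg)
  moreover have "(\<Sum>i\<in>I. b i * exp (- (c i * sum b I))) \<le> sum b I"
  proof (rule sum_mono)
    fix i assume "i \<in> I"
    then have "exp (- (c i * sum b I)) \<le> 1"
      using assms by (simp add: sum_nonneg)
    then show "b i * exp (- (c i * sum b I)) \<le> b i"
      using assms(2)[OF \<open>i \<in> I\<close>] by (simp add: mult_left_le)
  qed
  then have "0 \<le> ?g (sum b I)" by simp
  moreover have "0 \<le> sum b I"
    using assms(2) by (simp add: sum_nonneg)
  moreover have "\<forall>s. 0 \<le> s \<and> s \<le> sum b I \<longrightarrow> isCont ?g s"
    by (intro allI impI continuous_intros)
  ultimately obtain s where "?g s = 0"
    using IVT[of ?g 0 0 "sum b I"] by blast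
  then show thesis by (intro that) simp
qed

lemma surj_quotient_map:
  assumes "\<forall>i. a$i \<ge> 0"
  shows "surj (quotient_map a)"
  unfolding surj_def
proof
  fix c :: "complex^'a"
  obtain s where s: "s = (\<Sum>i\<in>UNIV. (cmod (c$i))^2 * exp (- (a$i * s)))"
    using ex_fixed_point_sum_exp[of UNIV "\<lambda>i. (cmod (c$i))^2" "\<lambda>i. a$i"] assms by auto
  define r where "r i = exp (- (a$i * s / 2))" for i
  have r2: "(r i)^2 = exp (- (a$i * s))" for i
    by (simp add: r_def power2_eq_square flip: exp_add)
  define p :: "'a pt" where "p = ((\<chi> i. Re (c$i) * r i), (\<chi> i. - Im (c$i) * r i),
     (\<Sum>i\<in>UNIV. (Re (c$i) * r i) * (- Im (c$i) * r i)) / 2)"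
  have z: "zcoord p i = of_real (r i) * c$i" for i
    by (simp add: zcoord_def p_def complex_eq_iff)
  have "sqnorm p = s"
    by (subst s) (simp add: sqnorm_eq_sum_norm_zcoord z norm_mult power_mult_distrib r2 mult.commute)
  moreover have "wcoord p = 0"
    by (simp add: wcoord_def p_def)
  moreover have "exp (a$i * s / 2) * r i = 1" for i
    by (simp add: r_def flip: exp_add)
  ultimately have "quotient_map a p = c"
    by (simp add: vec_eq_iff quotient_map_nth z mult.assoc flip: of_real_mult)
  then show "\<exists>p. c = quotient_map a p" by metis
qed

theorem lemma6p3:
  fixes a :: "real^'n"
  assumes "\<forall>i. a$i \<ge> 0"
  shows "(\<exists>\<xi>. is_reeb (eta a) \<xi>) \<and>
    (\<forall>\<xi>. is_reeb (eta a) \<xi> \<longrightarrow>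
      (\<exists>\<phi> :: real \<times> 'n pt \<Rightarrow> 'n pt.
         smooth \<phi> \<and>
         (\<forall>p t. ((\<lambda>s. \<phi> (s, p)) has_vector_derivative \<xi> (\<phi> (t, p))) (at t)) \<and>
         free_proper_R_action \<phi> \<and>
         (\<exists>(F :: 'n pt \<Rightarrow> complex^'n) F'.
            smooth F \<and>
            (\<forall>p. (F has_derivative F' p) (at p)) \<and>
            (\<forall>p. surj (F' p)) \<and>
            surj F \<and>
            (\<forall>p q. F p = F q \<longleftrightarrow> (\<exists>t. q = \<phi> (t, p))) \<and>
            (\<forall>p v. v \<in> Dist p \<longrightarrow> F' p (Jcr p v) = \<i> *s F' p v))))"
proof (intro conjI allI impI exI[of _ "\<lambda>tp. reeb_flow a (fst tp) (snd tp)"]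
    exI[of _ "quotient_map a"] exI[of _ "quotient_map_deriv a"])
  show "\<exists>\<xi>. is_reeb (eta a) \<xi>"
    using is_reeb_reeb[OF assms] by blast
  fix \<xi> p t
  assume "is_reeb (eta a) \<xi>"
  then have "\<xi> = reeb a" by (rule reeb_unique[OF assms])
  then show "((\<lambda>s. reeb_flow a (fst (s, p)) (snd (s, p))) has_vector_derivative
      \<xi> (reeb_flow a (fst (t, p)) (snd (t, p)))) (at t)"
    using has_vector_derivative_reeb_flow by simp
qed (simp_all add: assms smooth_reeb_flow free_proper_R_action_reeb_flow smooth_quotient_map
    has_derivative_quotient_map surj_quotient_map_deriv surj_quotient_map quotient_map_eq_iff
    quotient_map_deriv_Jcr)

end
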